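(* Let $a>1$ and let $\mathbf R_a$ be the region bounded by the limaçon given in polar coordinates by $r=\frac{\sqrt2}{\sqrt{(2a^2+1)\pi}}(a+\cos t)$, $t\in[0,2\pi]$. This region has area $1$. Let $O$ be the origin of the polar coordinates. The probability that the triangle formed by three independent uniformly distributed points of $\mathbf R_a$ contains $O$ is $$\mathcal P_a=\frac14-\frac{12a^2(4a^2+1)}{(2a^2+1)^3\pi^2}.$$ *)

theory Defs
  imports "HOL-Analysis.Analysis"
begin

definition limacon_const :: "real \<Rightarrow> real" where
  "limacon_const a = sqrt 2 / sqrt ((2 * a^2 + 1) * pi)"

text \<open>The region bounded by the limacon r = limacon_const a * (a + cos t), t in [0, 2 pi],
  in the complex plane (identified with R^2), origin O = 0 being the pole.\<close>
definition limacon_region :: "real \<Rightarrow> complex set" where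
  "limacon_region a =
     {complex_of_real r * cis t | r t. 0 \<le> t \<and> t \<le> 2 * pi \<and> 0 \<le> r \<and>
        r \<le> limacon_const a * (a + cos t)}"

definition triangle_contains_origin_prob :: "complex set \<Rightarrow> real" where
  "triangle_contains_origin_prob R =
     measure (lborel \<Otimes>\<^sub>M lborel \<Otimes>\<^sub>M lborel)
       {(p, q, s). p \<in> R \<and> q \<in> R \<and> s \<in> R \<and> (0::complex) \<in> convex hull {p, q, s}}
     / (measure lborel R) ^ 3"

end

theory Submission
  imports Defs
begin

text \<open>
  Three points p, q, s in general position span a triangle missing the origin exactly when one of
  them, say p, sees the other two strictly on the left of the directed line from 0 through p.
  These three events are disjoint and are carried onto each other by cyclically permuting the
  points, so for a region R of area 1 the probability is 1 - 3 I, where I is the integral over R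
  of m(p)^2 and m(p) is the area of the part of R to the left of the line through p. For the
  limacon, polar coordinates give m(r cis \<alpha>) = 1/2 - k sin \<alpha> with k = 4a / ((2a^2 + 1) pi),
  and I is an elementary trigonometric integral.
\<close>

lemma nn_integral_indicator_UN_incseq:
  assumes [measurable]: "f \<in> borel_measurable M" "\<And>i. A i \<in> sets M" and "incseq A"
  shows "(\<integral>\<^sup>+x. f x * indicator (\<Union>i. A i) x \<partial>M) = (SUP i. \<integral>\<^sup>+x. f x * indicator (A i) x \<partial>M)"
proof -
  have "range A \<subseteq> sets (density M f)" using assms(2) by auto
  from SUP_emeasure_incseq[OF this \<open>incseq A\<close>] show ?thesis
    by (simp add: emeasure_density)
qed

lemma nn_integral_FTC_between:
  fixes f F :: "real \<Rightarrow> real"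
  assumes [measurable]: "f \<in> borel_measurable borel"
    and "\<And>x. x \<in> {a..b} \<Longrightarrow> (F has_real_derivative f x) (at x)"
    and "\<And>x. x \<in> {a..b} \<Longrightarrow> 0 \<le> f x" and "a \<le> b"
    and "{a<..<b} \<subseteq> S" "S \<subseteq> {a..b}"
  shows "(\<integral>\<^sup>+x. ennreal (f x) * indicator S x \<partial>lborel) = ennreal (F b - F a)"
proof -
  have S_iff: "x \<in> S \<longleftrightarrow> x \<in> {a..b}" if "x \<noteq> a" "x \<noteq> b" for x
  proof -
    have "x \<in> {a..b} \<Longrightarrow> x \<in> {a<..<b}"
      using that by auto
    with assms(5,6) show ?thesis by blast
  qed
  have "AE x in lborel. ennreal (f x) * indicator S x = ennreal (f x) * indicator {a..b} x"
    using AE_lborel_singleton[of a] AE_lborel_singleton[of b]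
    by eventually_elim (simp add: indicator_def S_iff)
  then have "(\<integral>\<^sup>+x. ennreal (f x) * indicator S x \<partial>lborel) = (\<integral>\<^sup>+x. ennreal (f x) * indicator {a..b} x \<partial>lborel)"
    by (rule nn_integral_cong_AE)
  also have "\<dots> = ennreal (F b - F a)"
    using assms by (intro nn_integral_FTC_Icc) auto
  finally show ?thesis .
qed

lemma nn_integral_lborel_uminus:
  fixes h :: "'a::euclidean_space \<Rightarrow> ennreal"
  assumes [measurable]: "h \<in> borel_measurable borel"
  shows "(\<integral>\<^sup>+z. h z \<partial>lborel) = (\<integral>\<^sup>+z. h (- z) \<partial>lborel)"
  by (subst lborel_affine[of "-1" 0]) (simp_all add: nn_integral_density nn_integral_distr)

lemma hyperplane_null_sets_lborel:
  fixes b :: "'a::euclidean_space"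
  assumes "b \<noteq> 0"
  shows "{x. b \<bullet> x = 0} \<in> null_sets lborel"
proof -
  have "{x. b \<bullet> x = 0} \<in> null_sets lebesgue"
    using negligible_hyperplane[of b 0] assms by (simp add: negligible_iff_null_sets)
  moreover have "{x. b \<bullet> x = 0} \<in> sets lborel"
    by (simp add: borel_closed closed_hyperplane)
  ultimately show ?thesis
    using null_sets_completion_iff by blast
qed

lemma emeasure_lborel_Times:
  fixes A :: "'a::euclidean_space set" and B :: "'b::euclidean_space set"
  assumes "A \<in> sets borel" "B \<in> sets borel"
  shows "emeasure lborel (A \<times> B) = emeasure lborel A * emeasure lborel B"
  using lborel.emeasure_pair_measure_Times[of A lborel B] assms by (simp add: lborel_prod)

lemma sets_borel_Times:
  fixes A :: "'a::euclidean_space set" and B :: "'b::euclidean_space set"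
  assumes "A \<in> sets borel" "B \<in> sets borel"
  shows "A \<times> B \<in> sets borel"
  using pair_measureI[of A lborel B lborel] assms by (simp only: lborel_prod sets_lborel)

lemma sets_borel_Collect_triple:
  fixes P :: "'a::second_countable_topology \<times> 'b::second_countable_topology \<times> 'c::second_countable_topology \<Rightarrow> bool"
  assumes "Measurable.pred (borel \<Otimes>\<^sub>M borel \<Otimes>\<^sub>M borel) P"
  shows "{x. P x} \<in> sets borel"
  using assms by (simp add: pred_def space_pair_measure borel_prod)

lemma emeasure_lborel_pair_slices:
  fixes X :: "('a::euclidean_space \<times> 'b::euclidean_space) set"
  assumes "X \<in> sets borel"
  shows "emeasure lborel X = (\<integral>\<^sup>+x. emeasure lborel (Pair x -` X) \<partial>lborel)"
proof -
  have "X \<in> sets (lborel \<Otimes>\<^sub>M lborel)"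
    using assms by (simp only: lborel_prod sets_lborel)
  from lborel.emeasure_pair_measure_alt[OF this] show ?thesis
    by (simp only: lborel_prod)
qed

lemma nn_integral_lborel_triple:
  fixes f :: "'a::euclidean_space \<times> 'b::euclidean_space \<times> 'c::euclidean_space \<Rightarrow> ennreal"
  assumes [measurable]: "f \<in> borel_measurable borel"
  shows "(\<integral>\<^sup>+x. f x \<partial>lborel) = (\<integral>\<^sup>+p. \<integral>\<^sup>+q. \<integral>\<^sup>+s. f (p, q, s) \<partial>lborel \<partial>lborel \<partial>lborel)"
proof -
  have "(\<integral>\<^sup>+x. f x \<partial>lborel) = (\<integral>\<^sup>+p. \<integral>\<^sup>+y. f (p, y) \<partial>lborel \<partial>lborel)"
    by (subst lborel_prod[symmetric], rule lborel.nn_integral_fst[symmetric]) (simp add: lborel_prod)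
  also have "\<dots> = (\<integral>\<^sup>+p. \<integral>\<^sup>+q. \<integral>\<^sup>+s. f (p, q, s) \<partial>lborel \<partial>lborel \<partial>lborel)"
    by (intro nn_integral_cong, subst lborel_prod[symmetric], rule lborel.nn_integral_fst[symmetric])
       (simp add: lborel_prod)
  finally show ?thesis .
qed

lemma measure_eq_diff_if_emeasure_add:
  assumes "emeasure M A + ennreal c = ennreal b" "0 \<le> c" "0 \<le> b"
  shows "measure M A = b - c"
proof -
  have "emeasure M A + ennreal c \<noteq> \<infinity>"
    using assms(1) by simp
  then have "emeasure M A \<noteq> \<infinity>"
    by simp
  with assms(1) have "ennreal (measure M A) + ennreal c = ennreal b"
    by (simp add: emeasure_eq_ennreal_measure)
  then have "ennreal (measure M A + c) = ennreal b"
    using assms(2) by (simp add: ennreal_plus)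
  then have "measure M A + c = b"
    using assms(2,3) by (subst (asm) ennreal_inj) auto
  then show ?thesis
    by simp
qed

section \<open>Polar coordinates in the plane\<close>

lemma arctan_inverse_exhaustion:
  defines "c \<equiv> \<lambda>n::nat. arctan (1 / (real n + 1))"
  shows "incseq (\<lambda>n. {c n..pi - c n})" and "(\<Union>n. {c n..pi - c n}) = {0<..<pi}"
proof -
  have c_pos: "0 < c n" for n by (simp add: c_def)
  have c_antimono: "c n \<le> c m" if "m \<le> n" for m n
    using that by (simp add: c_def arctan_le_iff frac_le)
  show "incseq (\<lambda>n. {c n..pi - c n})"
    by (auto simp: incseq_def intro: order_trans[OF c_antimono] dest: c_antimono)
  have "(\<lambda>n. 1 / (real n + 1)) \<longlonglongrightarrow> 0"
    using LIMSEQ_inverse_real_of_nat by (simp add: inverse_eq_divide add.commute)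
  then have "c \<longlonglongrightarrow> arctan 0"
    unfolding c_def by (intro tendsto_intros)
  then have "c \<longlonglongrightarrow> 0" by simp
  show "(\<Union>n. {c n..pi - c n}) = {0<..<pi}"
  proof (intro equalityI subsetI)
    fix t assume "t \<in> {0<..<pi}"
    then have "eventually (\<lambda>n. c n < min t (pi - t)) sequentially"
      using \<open>c \<longlonglongrightarrow> 0\<close> by (intro order_tendstoD) auto
    then obtain n where "c n < min t (pi - t)" by (auto simp: eventually_sequentially)
    then show "t \<in> (\<Union>n. {c n..pi - c n})" by (intro UN_I[of n]) auto
  next
    fix t assume "t \<in> (\<Union>n. {c n..pi - c n})"
    then obtain n where "c n \<le> t" "t \<le> pi - c n" by auto
    with c_pos[of n] show "t \<in> {0<..<pi}" by auto
  qed
qed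

lemma measurable_cot [measurable]: "(cot :: real \<Rightarrow> real) \<in> borel_measurable borel"
  unfolding cot_def by measurable

lemma nn_integral_cot_substitution_Icc:
  fixes F :: "real \<Rightarrow> ennreal"
  assumes [measurable]: "F \<in> borel_measurable borel" and "0 < c" "c < pi / 2"
  shows "(\<integral>\<^sup>+x. F x * indicator {- cot c..cot c} x \<partial>lborel) =
    (\<integral>\<^sup>+t. F (- cot t) * ennreal (1 / (sin t)^2) * indicator {c..pi - c} t \<partial>lborel)"
proof -
  have sin_pos: "0 < sin t" if "t \<in> {c..pi - c}" for t
    using that assms by (auto intro: sin_gt_zero)
  have "- cot (pi - c) = cot c"
    by (simp add: cot_def sin_diff cos_diff)
  moreover have "(\<integral>\<^sup>+x. F x * indicator {- cot c..- cot (pi - c)} x \<partial>lborel)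
    = (\<integral>\<^sup>+t. F (- cot t) * ennreal (1 / (sin t)^2) * indicator {c..pi - c} t \<partial>lborel)"
  proof (rule nn_integral_substitution_aux)
    show "((\<lambda>t. - cot t) has_real_derivative 1 / (sin t)^2) (at t)" if "t \<in> {c..pi - c}" for t
      using DERIV_minus[OF DERIV_cot[of t]] sin_pos[OF that] by (simp add: divide_inverse)
    show "continuous_on {c..pi - c} (\<lambda>t. 1 / (sin t)^2)"
      using sin_pos by (intro continuous_intros) force
  qed (use assms in auto)
  ultimately show ?thesis by simp
qed

lemma nn_integral_cot_substitution:
  fixes F :: "real \<Rightarrow> ennreal"
  assumes [measurable]: "F \<in> borel_measurable borel"
  shows "(\<integral>\<^sup>+x. F x \<partial>lborel) =
    (\<integral>\<^sup>+t. F (- cot t) * ennreal (1 / (sin t)^2) * indicator {0<..<pi} t \<partial>lborel)"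
proof -
  define c where "c n = arctan (1 / (real n + 1))" for n
  have substitution: "(\<integral>\<^sup>+x. F x * indicator {- (real n + 1)..real n + 1} x \<partial>lborel)
     = (\<integral>\<^sup>+t. F (- cot t) * ennreal (1 / (sin t)^2) * indicator {c n..pi - c n} t \<partial>lborel)" for n
  proof -
    have "cot (c n) = real n + 1"
      by (simp add: c_def cot_altdef tan_arctan)
    moreover have "0 < c n" "c n < pi / 2"
      using arctan_bounded[of "1 / (real n + 1)"] by (auto simp: c_def)
    ultimately show ?thesis
      using nn_integral_cot_substitution_Icc[OF assms, of "c n"] by simp
  qed
  have exhaustion: "incseq (\<lambda>n. {c n..pi - c n})" "(\<Union>n. {c n..pi - c n}) = {0<..<pi}"
    unfolding c_def by (rule arctan_inverse_exhaustion)+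
  have "incseq (\<lambda>n. {- (real n + 1)..real n + 1})"
    by (auto simp: incseq_def)
  moreover have "(\<Union>n. {- (real n + 1)..real n + 1}) = UNIV"
  proof -
    have "x \<in> {- (real (nat \<lceil>\<bar>x\<bar>\<rceil>) + 1)..real (nat \<lceil>\<bar>x\<bar>\<rceil>) + 1}" for x
      by auto linarith+
    then show ?thesis by blast
  qed
  ultimately have "(\<integral>\<^sup>+x. F x \<partial>lborel) = (SUP n. \<integral>\<^sup>+x. F x * indicator {- (real n + 1)..real n + 1} x \<partial>lborel)"
    using nn_integral_indicator_UN_incseq[of F lborel "\<lambda>n. {- (real n + 1)..real n + 1}"] by simp
  also have "\<dots> = (\<integral>\<^sup>+t. F (- cot t) * ennreal (1 / (sin t)^2) * indicator {0<..<pi} t \<partial>lborel)"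
    unfolding substitution exhaustion(2)[symmetric]
    by (rule nn_integral_indicator_UN_incseq[symmetric]) (auto simp: exhaustion(1))
  finally show ?thesis .
qed

lemma measurable_Complex_pair [measurable]:
  "(\<lambda>(x, y). Complex x y) \<in> borel_measurable (borel :: (real \<times> real) measure)"
proof -
  have "continuous_on UNIV (\<lambda>(x::real, y::real). Complex x y)"
    unfolding Complex_eq case_prod_unfold by (intro continuous_intros)
  then show ?thesis by (rule borel_measurable_continuous_onI)
qed

lemma measurable_Complex [measurable]:
  assumes [measurable]: "f \<in> borel_measurable M" "g \<in> borel_measurable M"
  shows "(\<lambda>x. Complex (f x) (g x)) \<in> borel_measurable M"
  unfolding Complex_eq by measurable

lemma lborel_complex_eq_distr_Complex:
  "(lborel :: complex measure) = distr (lborel \<Otimes>\<^sub>M lborel) borel (\<lambda>(x, y). Complex x y)"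
proof (rule lborel_eqI)
  fix l u :: complex assume le: "\<And>b. b \<in> Basis \<Longrightarrow> l \<bullet> b \<le> u \<bullet> b"
  then have "Re l \<le> Re u" "Im l \<le> Im u"
    using le[of 1] le[of \<i>] by (auto simp: Basis_complex_def)
  have "(\<lambda>(x, y). Complex x y) -` box l u \<inter> space (lborel \<Otimes>\<^sub>M lborel) = box (Re l) (Re u) \<times> box (Im l) (Im u)"
    by (auto simp: box_def Basis_complex_def inner_complex_def space_pair_measure)
  moreover have "(\<lambda>(x, y). Complex x y) \<in> lborel \<Otimes>\<^sub>M lborel \<rightarrow>\<^sub>M (borel :: complex measure)"
    by (simp add: lborel_prod measurable_lborel1)
  ultimately show "emeasure (distr (lborel \<Otimes>\<^sub>M lborel) borel (\<lambda>(x, y). Complex x y)) (box l u) = (\<Prod>b\<in>Basis. (u - l) \<bullet> b)"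
    using \<open>Re l \<le> Re u\<close> \<open>Im l \<le> Im u\<close>
    by (simp add: emeasure_distr lborel.emeasure_pair_measure_Times ennreal_mult Basis_complex_def inner_complex_def)
qed simp

lemma nn_integral_lborel_complex:
  assumes [measurable]: "h \<in> borel_measurable borel"
  shows "(\<integral>\<^sup>+z. h z \<partial>lborel) = (\<integral>\<^sup>+y. \<integral>\<^sup>+x. h (Complex x y) \<partial>lborel \<partial>lborel)"
proof -
  have [measurable]: "(\<lambda>(x, y). Complex x y) \<in> lborel \<Otimes>\<^sub>M lborel \<rightarrow>\<^sub>M (borel :: complex measure)"
    by (simp add: lborel_prod measurable_lborel1)
  show ?thesis
    by (subst lborel_complex_eq_distr_Complex)
       (simp add: nn_integral_distr lborel_pair.nn_integral_snd[symmetric] case_prod_unfold)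
qed

lemma nn_integral_horizontal_line_cot:
  fixes h :: "complex \<Rightarrow> ennreal"
  assumes [measurable]: "h \<in> borel_measurable borel" and "0 < y"
  shows "(\<integral>\<^sup>+x. h (Complex x y) \<partial>lborel) =
    (\<integral>\<^sup>+t. ennreal y * ennreal (1 / (sin t)^2) * h (Complex (y * cot t) y) * indicator {0<..<pi} t \<partial>lborel)"
proof -
  have "(\<integral>\<^sup>+x. h (Complex x y) \<partial>lborel) = ennreal y * (\<integral>\<^sup>+s. h (Complex (- y * s) y) \<partial>lborel)"
    using nn_integral_real_affine[of "\<lambda>x. h (Complex x y)" "- y" 0] \<open>0 < y\<close> by simp
  also have "(\<integral>\<^sup>+s. h (Complex (- y * s) y) \<partial>lborel) =
      (\<integral>\<^sup>+t. ennreal (1 / (sin t)^2) * h (Complex (y * cot t) y) * indicator {0<..<pi} t \<partial>lborel)"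
    by (subst nn_integral_cot_substitution) (simp_all add: mult_ac)
  also have "ennreal y * \<dots> = (\<integral>\<^sup>+t. ennreal y * (ennreal (1 / (sin t)^2) * h (Complex (y * cot t) y) * indicator {0<..<pi} t) \<partial>lborel)"
    by (rule nn_integral_cmult[symmetric]) measurable
  finally show ?thesis
    by (simp add: mult.assoc)
qed

lemma nn_integral_ray_rescale_sin:
  fixes h :: "complex \<Rightarrow> ennreal"
  assumes [measurable]: "h \<in> borel_measurable borel" and "0 < sin t"
  shows "(\<integral>\<^sup>+y. ennreal y * h (Complex (y * cot t) y) * indicator {0<..} y \<partial>lborel) =
    ennreal ((sin t)^2) * (\<integral>\<^sup>+r. ennreal r * h (of_real r * cis t) * indicator {0<..} r \<partial>lborel)"
proof -
  have rescale: "ennreal (sin t * r) * h (Complex (sin t * r * cot t) (sin t * r)) * indicator {0<..} (sin t * r)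
      = ennreal (sin t) * (ennreal r * h (of_real r * cis t) * indicator {0<..} r)" for r
  proof -
    have "Complex (sin t * r * cot t) (sin t * r) = of_real r * cis t"
      using \<open>0 < sin t\<close> by (simp add: complex_eq_iff cot_def)
    then show ?thesis
      using \<open>0 < sin t\<close> by (cases "0 < r") (simp_all add: ennreal_mult zero_less_mult_iff mult_ac)
  qed
  have "(\<integral>\<^sup>+y. ennreal y * h (Complex (y * cot t) y) * indicator {0<..} y \<partial>lborel) =
      ennreal (sin t) * (\<integral>\<^sup>+r. ennreal (sin t) * (ennreal r * h (of_real r * cis t) * indicator {0<..} r) \<partial>lborel)"
    using nn_integral_real_affine[of "\<lambda>y. ennreal y * h (Complex (y * cot t) y) * indicator {0<..} y" "sin t" 0]
      \<open>0 < sin t\<close> by (simp add: rescale)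
  also have "\<dots> = ennreal ((sin t)^2) * (\<integral>\<^sup>+r. ennreal r * h (of_real r * cis t) * indicator {0<..} r \<partial>lborel)"
    using \<open>0 < sin t\<close> by (simp add: nn_integral_cmult ennreal_mult power2_eq_square mult.assoc)
  finally show ?thesis .
qed

lemma measurable_cis [measurable]: "cis \<in> borel_measurable borel"
  unfolding cis.code by measurable

lemma nn_integral_upper_half_plane_polar:
  fixes h :: "complex \<Rightarrow> ennreal"
  assumes [measurable]: "h \<in> borel_measurable borel"
  shows "(\<integral>\<^sup>+z. h z * indicator {z. 0 < Im z} z \<partial>lborel) =
    (\<integral>\<^sup>+t. (\<integral>\<^sup>+r. ennreal r * h (of_real r * cis t) * indicator {0<..} r \<partial>lborel) * indicator {0<..<pi} t \<partial>lborel)"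
proof -
  define H where "H t y = ennreal y * h (Complex (y * cot t) y) * indicator {0<..} y" for t y
  have [measurable]: "case_prod H \<in> borel_measurable (lborel \<Otimes>\<^sub>M lborel)"
    unfolding H_def by measurable
  have "(\<integral>\<^sup>+z. h z * indicator {z. 0 < Im z} z \<partial>lborel) =
      (\<integral>\<^sup>+y. (\<integral>\<^sup>+x. h (Complex x y) \<partial>lborel) * indicator {0<..} y \<partial>lborel)"
    by (subst nn_integral_lborel_complex) (auto intro!: nn_integral_cong split: split_indicator)
  also have "\<dots> = (\<integral>\<^sup>+y. \<integral>\<^sup>+t. ennreal (1 / (sin t)^2) * indicator {0<..<pi} t * H t y \<partial>lborel \<partial>lborel)"
    by (intro nn_integral_cong)
       (auto simp: nn_integral_horizontal_line_cot H_def mult_ac split: split_indicator)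
  also have "\<dots> = (\<integral>\<^sup>+t. ennreal (1 / (sin t)^2) * indicator {0<..<pi} t * (\<integral>\<^sup>+y. H t y \<partial>lborel) \<partial>lborel)"
    by (subst lborel_pair.Fubini') (simp_all add: nn_integral_cmult)
  also have "\<dots> = (\<integral>\<^sup>+t. (\<integral>\<^sup>+r. ennreal r * h (of_real r * cis t) * indicator {0<..} r \<partial>lborel) * indicator {0<..<pi} t \<partial>lborel)"
  proof (intro nn_integral_cong)
    fix t :: real
    show "ennreal (1 / (sin t)^2) * indicator {0<..<pi} t * (\<integral>\<^sup>+y. H t y \<partial>lborel) =
        (\<integral>\<^sup>+r. ennreal r * h (of_real r * cis t) * indicator {0<..} r \<partial>lborel) * indicator {0<..<pi} t"
    proof (cases "t \<in> {0<..<pi}")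
      case True
      then have "0 < sin t" by (auto intro: sin_gt_zero)
      then have "ennreal (1 / (sin t)^2) * ennreal ((sin t)^2) = 1"
        by (simp flip: ennreal_mult)
      moreover have "(\<integral>\<^sup>+y. H t y \<partial>lborel) =
          ennreal ((sin t)^2) * (\<integral>\<^sup>+r. ennreal r * h (of_real r * cis t) * indicator {0<..} r \<partial>lborel)"
        unfolding H_def using \<open>0 < sin t\<close> by (rule nn_integral_ray_rescale_sin[OF assms])
      ultimately show ?thesis
        using True by (simp add: mult.assoc[symmetric])
    qed simp
  qed
  finally show ?thesis .
qed

lemma nn_integral_lower_half_plane_polar:
  fixes h :: "complex \<Rightarrow> ennreal"
  assumes [measurable]: "h \<in> borel_measurable borel"
  shows "(\<integral>\<^sup>+z. h z * indicator {z. Im z < 0} z \<partial>lborel) =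
    (\<integral>\<^sup>+t. (\<integral>\<^sup>+r. ennreal r * h (of_real r * cis t) * indicator {0<..} r \<partial>lborel) * indicator {pi<..<2*pi} t \<partial>lborel)"
proof -
  define G where "G t = (\<integral>\<^sup>+r. ennreal r * h (of_real r * cis t) * indicator {0<..} r \<partial>lborel)" for t
  have [measurable]: "G \<in> borel_measurable borel"
    unfolding G_def by measurable
  have "(\<integral>\<^sup>+z. h z * indicator {z. Im z < 0} z \<partial>lborel) = (\<integral>\<^sup>+z. h (- z) * indicator {z. 0 < Im z} z \<partial>lborel)"
    by (subst nn_integral_lborel_uminus) (simp_all add: indicator_def)
  also have "\<dots> = (\<integral>\<^sup>+t. G (t + pi) * indicator {0<..<pi} t \<partial>lborel)"
  proof -
    have "- (of_real r * cis t) = of_real r * cis (t + pi)" for r t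
      by (simp add: complex_eq_iff)
    then show ?thesis
      by (subst nn_integral_upper_half_plane_polar) (simp_all add: G_def)
  qed
  also have "\<dots> = (\<integral>\<^sup>+t. G t * indicator {pi<..<2*pi} t \<partial>lborel)"
    using nn_integral_real_affine[of "\<lambda>t. G t * indicator {pi<..<2*pi} t" 1 pi]
    by (simp add: add.commute indicator_def)
  finally show ?thesis
    unfolding G_def .
qed

lemma nn_integral_polar:
  fixes h :: "complex \<Rightarrow> ennreal"
  assumes [measurable]: "h \<in> borel_measurable borel"
  shows "(\<integral>\<^sup>+z. h z \<partial>lborel) =
    (\<integral>\<^sup>+t. (\<integral>\<^sup>+r. ennreal r * h (of_real r * cis t) * indicator {0<..} r \<partial>lborel) * indicator {0<..<2*pi} t \<partial>lborel)"
proof -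
  define G where "G t = (\<integral>\<^sup>+r. ennreal r * h (of_real r * cis t) * indicator {0<..} r \<partial>lborel)" for t
  have [measurable]: "G \<in> borel_measurable borel"
    unfolding G_def by measurable
  have "{z. \<i> \<bullet> z = 0} \<in> null_sets lborel"
    by (rule hyperplane_null_sets_lborel) simp
  from AE_not_in[OF this] have "AE z in lborel. Im z \<noteq> 0"
    by eventually_elim (simp add: inner_complex_def)
  then have "(\<integral>\<^sup>+z. h z \<partial>lborel) =
      (\<integral>\<^sup>+z. h z * indicator {z. 0 < Im z} z + h z * indicator {z. Im z < 0} z \<partial>lborel)"
    by (intro nn_integral_cong_AE) (auto split: split_indicator)
  also have "\<dots> = (\<integral>\<^sup>+t. G t * indicator {0<..<pi} t \<partial>lborel) + (\<integral>\<^sup>+t. G t * indicator {pi<..<2*pi} t \<partial>lborel)"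
    by (simp add: nn_integral_add nn_integral_upper_half_plane_polar nn_integral_lower_half_plane_polar G_def)
  also have "\<dots> = (\<integral>\<^sup>+t. G t * indicator {0<..<2*pi} t \<partial>lborel)"
  proof -
    have "AE t in lborel. G t * indicator {0<..<pi} t + G t * indicator {pi<..<2*pi} t = G t * indicator {0<..<2*pi} t"
      using AE_lborel_singleton[of pi] by eventually_elim (auto split: split_indicator)
    then show ?thesis
      by (subst nn_integral_add[symmetric]) (auto intro: nn_integral_cong_AE)
  qed
  finally show ?thesis
    unfolding G_def .
qed

section \<open>Triangles containing the origin\<close>

(* 0 < cross p q iff q lies strictly to the left of the directed line from 0 through p. *)
definition cross :: "complex \<Rightarrow> complex \<Rightarrow> real" where
  "cross p q = Im (cnj p * q)"

lemma cross_eq: "cross p q = Re p * Im q - Im p * Re q"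
  by (simp add: cross_def)

lemma cross_anticommute: "cross q p = - cross p q"
  by (simp add: cross_eq)

lemma cross_pos_asym: "0 < cross p q \<Longrightarrow> \<not> 0 < cross q p"
  by (simp add: cross_anticommute[of q p])

lemma measurable_cross [measurable]:
  assumes [measurable]: "f \<in> borel_measurable M" "g \<in> borel_measurable M"
  shows "(\<lambda>x. cross (f x) (g x)) \<in> borel_measurable M"
  unfolding cross_eq by measurable

lemma cross_null_sets:
  assumes "p \<noteq> 0"
  shows "{z. cross p z = 0} \<in> null_sets lborel"
proof -
  have "{z. cross p z = 0} = {z. (\<i> * p) \<bullet> z = 0}"
    by (auto simp: cross_eq inner_complex_def)
  then show ?thesis
    using hyperplane_null_sets_lborel[of "\<i> * p"] assms by simp
qed

lemma cross_pos_imp_zero_notin_convex_hull: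
  assumes "0 < cross p q" "0 < cross p s"
  shows "0 \<notin> convex hull {p, q, s}"
proof
  assume "0 \<in> convex hull {p, q, s}"
  then obtain u v w where uvw: "0 \<le> u" "0 \<le> v" "0 \<le> w" "u + v + w = 1"
    and comb: "u *\<^sub>R p + v *\<^sub>R q + w *\<^sub>R s = 0"
    unfolding convex_hull_3 by auto
  have "cross p (u *\<^sub>R p + v *\<^sub>R q + w *\<^sub>R s) = v * cross p q + w * cross p s"
    by (simp add: cross_eq algebra_simps)
  with comb have "v * cross p q + w * cross p s = 0"
    by (simp add: cross_eq)
  moreover have "0 \<le> v * cross p q" "0 \<le> w * cross p s"
    using uvw assms by simp_all
  ultimately have "v * cross p q = 0" "w * cross p s = 0"
    by linarith+
  with assms have "v = 0" "w = 0"
    by simp_all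
  with uvw comb have "p = 0" by simp
  with assms show False by (simp add: cross_eq)
qed

lemma cross_cyclic_combination:
  "cross q s *\<^sub>R p + cross s p *\<^sub>R q + cross p q *\<^sub>R s = 0"
  by (simp add: complex_eq_iff cross_eq algebra_simps)

lemma zero_in_convex_hull_if_cross_same_sign:
  assumes "(0 < cross p q \<and> 0 < cross q s \<and> 0 < cross s p) \<or> (cross p q < 0 \<and> cross q s < 0 \<and> cross s p < 0)"
  shows "0 \<in> convex hull {p, q, s}"
proof -
  define \<sigma> where "\<sigma> = cross q s + cross s p + cross p q"
  from assms have "\<sigma> \<noteq> 0 \<and> 0 \<le> cross q s / \<sigma> \<and> 0 \<le> cross s p / \<sigma> \<and> 0 \<le> cross p q / \<sigma>"
  proof (elim disjE conjE)
    assume "0 < cross p q" "0 < cross q s" "0 < cross s p"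
    moreover from this have "0 < \<sigma>" by (simp add: \<sigma>_def)
    ultimately show ?thesis by simp
  next
    assume "cross p q < 0" "cross q s < 0" "cross s p < 0"
    moreover from this have "\<sigma> < 0" by (simp add: \<sigma>_def)
    ultimately show ?thesis by (simp add: divide_nonpos_neg)
  qed
  moreover have "cross q s / \<sigma> + cross s p / \<sigma> + cross p q / \<sigma> = 1"
    using calculation by (simp add: \<sigma>_def add_divide_distrib[symmetric])
  moreover have "(cross q s / \<sigma>) *\<^sub>R p + (cross s p / \<sigma>) *\<^sub>R q + (cross p q / \<sigma>) *\<^sub>R s
      = (1 / \<sigma>) *\<^sub>R (cross q s *\<^sub>R p + cross s p *\<^sub>R q + cross p q *\<^sub>R s)"
    by (simp add: scaleR_add_right divide_inverse mult.commute)
  ultimately show ?thesis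
    unfolding convex_hull_3 cross_cyclic_combination
    by (intro CollectI exI[of _ "cross q s / \<sigma>"] exI[of _ "cross s p / \<sigma>"] exI[of _ "cross p q / \<sigma>"]) simp
qed

lemma zero_in_convex_hull_or_apex:
  assumes "cross p q \<noteq> 0" "cross q s \<noteq> 0" "cross s p \<noteq> 0"
  shows "0 \<in> convex hull {p, q, s} \<or> (0 < cross p q \<and> 0 < cross p s) \<or>
    (0 < cross q s \<and> 0 < cross q p) \<or> (0 < cross s p \<and> 0 < cross s q)"
  using zero_in_convex_hull_if_cross_same_sign[of p q s] assms
    cross_anticommute[of p s] cross_anticommute[of q p] cross_anticommute[of s q]
  by linarith

lemma closed_triples_zero_in_convex_hull:
  "closed {(p, q, s). (0::'a::euclidean_space) \<in> convex hull {p, q, s}}"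
proof -
  define S :: "(real \<times> real \<times> real) set" where
    "S = {(u, v, w). 0 \<le> u \<and> 0 \<le> v \<and> 0 \<le> w \<and> u + v + w = 1}"
  define T :: "((real \<times> real \<times> real) \<times> ('a \<times> 'a \<times> 'a)) set" where
    "T = {((u, v, w), (p, q, s)). u *\<^sub>R p + v *\<^sub>R q + w *\<^sub>R s = 0}"
  have "closed S"
    unfolding S_def case_prod_unfold
    by (intro closed_Collect_conj closed_Collect_le closed_Collect_eq continuous_intros)
  moreover have "S \<subseteq> cbox (0, 0, 0) (1, 1, 1)"
    by (auto simp: S_def cbox_Pair_iff)
  ultimately have "compact S"
    by (metis bounded_cbox bounded_subset compact_eq_bounded_closed)
  moreover have "closed T"
    unfolding T_def case_prod_unfold by (intro closed_Collect_eq continuous_intros)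
  ultimately have "closed {x. \<exists>w. w \<in> S \<and> (w, x) \<in> T}"
    by (rule closed_compact_projection)
  also have "{x. \<exists>w. w \<in> S \<and> (w, x) \<in> T} = {(p, q, s). 0 \<in> convex hull {p, q, s}}"
    unfolding convex_hull_3 S_def T_def by (auto simp: eq_commute[of 0])
  finally show ?thesis .
qed

definition left_measure :: "complex set \<Rightarrow> complex \<Rightarrow> ennreal" where
  "left_measure R p = emeasure lborel (R \<inter> {z. 0 < cross p z})"

lemma measurable_left_measure [measurable]:
  assumes [measurable]: "R \<in> sets borel"
  shows "left_measure R \<in> borel_measurable borel"
proof -
  have "Measurable.pred (borel \<Otimes>\<^sub>M borel) (\<lambda>x. snd x \<in> R \<and> 0 < cross (fst x) (snd x))"
    by measurable
  then have "{x. snd x \<in> R \<and> 0 < cross (fst x) (snd x)} \<in> sets (lborel \<Otimes>\<^sub>M lborel)"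
    by (simp add: pred_def space_pair_measure sets_pair_measure_cong[OF sets_lborel sets_lborel])
  moreover have "Pair p -` {x. snd x \<in> R \<and> 0 < cross (fst x) (snd x)} = R \<inter> {z. 0 < cross p z}" for p
    by auto
  ultimately show ?thesis
    using lborel.measurable_emeasure_Pair[of _ lborel] unfolding left_measure_def by simp
qed

definition rotate_triple :: "'a \<times> 'a \<times> 'a \<Rightarrow> 'a \<times> 'a \<times> 'a" where
  "rotate_triple = (\<lambda>(p, q, s). (q, s, p))"

lemma measurable_rotate_triple [measurable]:
  "(rotate_triple :: 'a::euclidean_space \<times> 'a \<times> 'a \<Rightarrow> _) \<in> borel_measurable borel"
  unfolding rotate_triple_def case_prod_unfold
  by (intro borel_measurable_continuous_onI continuous_intros)

lemma emeasure_lborel_rotate_triple: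
  fixes X :: "('a::euclidean_space \<times> 'a \<times> 'a) set"
  assumes [measurable]: "X \<in> sets borel"
  shows "emeasure lborel (rotate_triple -` X) = emeasure lborel X"
proof -
  have [measurable]: "rotate_triple -` X \<in> sets borel"
    by (rule measurable_sets_borel[OF measurable_rotate_triple assms])
  have "emeasure lborel (rotate_triple -` X) = (\<integral>\<^sup>+p. \<integral>\<^sup>+q. \<integral>\<^sup>+s. indicator X (q, s, p) \<partial>lborel \<partial>lborel \<partial>lborel)"
  proof -
    have [measurable]: "(\<lambda>x. indicator X (rotate_triple x) :: ennreal) \<in> borel_measurable borel"
      by measurable
    have "emeasure lborel (rotate_triple -` X) = (\<integral>\<^sup>+x. indicator X (rotate_triple x) \<partial>lborel)"
      by (simp add: indicator_vimage[symmetric])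
    also have "\<dots> = (\<integral>\<^sup>+p. \<integral>\<^sup>+q. \<integral>\<^sup>+s. indicator X (q, s, p) \<partial>lborel \<partial>lborel \<partial>lborel)"
      unfolding nn_integral_lborel_triple[OF \<open>_ \<in> borel_measurable borel\<close>] by (simp add: rotate_triple_def)
    finally show ?thesis .
  qed
  also have "\<dots> = (\<integral>\<^sup>+q. \<integral>\<^sup>+p. \<integral>\<^sup>+s. indicator X (q, s, p) \<partial>lborel \<partial>lborel \<partial>lborel)"
    by (rule lborel_pair.Fubini') measurable
  also have "\<dots> = (\<integral>\<^sup>+q. \<integral>\<^sup>+s. \<integral>\<^sup>+p. indicator X (q, s, p) \<partial>lborel \<partial>lborel \<partial>lborel)"
    by (intro nn_integral_cong lborel_pair.Fubini') measurable
  also have "\<dots> = emeasure lborel X"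
    by (simp add: nn_integral_lborel_triple[symmetric])
  finally show ?thesis .
qed

lemma null_sets_lborel_rotate_triple:
  fixes N :: "('a::euclidean_space \<times> 'a \<times> 'a) set"
  assumes "N \<in> null_sets lborel"
  shows "rotate_triple -` N \<in> null_sets lborel"
proof -
  have [measurable]: "N \<in> sets borel"
    using null_setsD2[OF assms] by simp
  show ?thesis
    using assms emeasure_lborel_rotate_triple[of N]
    by (intro null_setsI) (simp_all add: null_setsD1 measurable_sets_borel[OF measurable_rotate_triple])
qed

definition origin_triangles :: "complex set \<Rightarrow> (complex \<times> complex \<times> complex) set" where
  "origin_triangles R = {(p, q, s). p \<in> R \<and> q \<in> R \<and> s \<in> R \<and> 0 \<in> convex hull {p, q, s}}"

definition apex_triples :: "complex set \<Rightarrow> (complex \<times> complex \<times> complex) set" where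
  "apex_triples R = {(p, q, s). p \<in> R \<and> q \<in> R \<and> s \<in> R \<and> 0 < cross p q \<and> 0 < cross p s}"

lemma sets_origin_triangles [measurable]:
  assumes [measurable]: "R \<in> sets borel"
  shows "origin_triangles R \<in> sets borel"
proof -
  have "origin_triangles R = {x. fst x \<in> R \<and> fst (snd x) \<in> R \<and> snd (snd x) \<in> R}
      \<inter> {(p, q, s). (0::complex) \<in> convex hull {p, q, s}}"
    by (auto simp: origin_triangles_def)
  also have "\<dots> \<in> sets borel"
    by (intro sets.Int sets_borel_Collect_triple borel_closed closed_triples_zero_in_convex_hull) measurable
  finally show ?thesis .
qed

lemma sets_apex_triples [measurable]:
  assumes [measurable]: "R \<in> sets borel"
  shows "apex_triples R \<in> sets borel"
proof -
  have "Measurable.pred (borel \<Otimes>\<^sub>M borel \<Otimes>\<^sub>M borel) (\<lambda>x. fst x \<in> R \<and> fst (snd x) \<in> R \<and> snd (snd x) \<in> R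
      \<and> 0 < cross (fst x) (fst (snd x)) \<and> 0 < cross (fst x) (snd (snd x)))"
    by measurable
  then show ?thesis
    unfolding apex_triples_def case_prod_unfold by (rule sets_borel_Collect_triple)
qed

lemma emeasure_apex_triples:
  assumes [measurable]: "R \<in> sets borel"
  shows "emeasure lborel (apex_triples R) = (\<integral>\<^sup>+p. indicator R p * left_measure R p ^ 2 \<partial>lborel)"
proof -
  have "emeasure lborel (Pair p -` apex_triples R) = indicator R p * left_measure R p ^ 2" for p
  proof -
    define H where "H = R \<inter> {z. 0 < cross p z}"
    have H_sets: "H \<in> sets borel"
      unfolding H_def by measurable
    have "Pair p -` apex_triples R = (if p \<in> R then H \<times> H else {})"
      by (auto simp: apex_triples_def H_def)
    then show ?thesis
      using H_sets by (simp add: emeasure_lborel_Times left_measure_def H_def power2_eq_square)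
  qed
  then show ?thesis
    by (simp add: emeasure_lborel_pair_slices[OF sets_apex_triples[OF assms]])
qed

lemma null_sets_cross_zero_triples: "{(p, q, s :: complex). cross p q = 0} \<in> null_sets lborel"
proof -
  define N where "N = {(p, q, s :: complex). cross p q = 0}"
  have "Measurable.pred (borel \<Otimes>\<^sub>M borel \<Otimes>\<^sub>M borel) (\<lambda>x::complex \<times> complex \<times> complex. cross (fst x) (fst (snd x)) = 0)"
    by measurable
  then have N_sets: "N \<in> sets borel"
    unfolding N_def case_prod_unfold by (rule sets_borel_Collect_triple)
  have "AE p in lborel. emeasure lborel (Pair p -` N) = 0"
    using AE_lborel_singleton[of 0]
  proof eventually_elim
    case (elim p)
    have "Pair p -` N = {q. cross p q = 0} \<times> UNIV"
      by (auto simp: N_def)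
    then show ?case
      using cross_null_sets[OF elim] by (simp add: emeasure_lborel_Times null_setsD1 null_setsD2)
  qed
  then have "(\<integral>\<^sup>+p. emeasure lborel (Pair p -` N) \<partial>lborel) = (\<integral>\<^sup>+p. 0 \<partial>(lborel :: complex measure))"
    by (rule nn_integral_cong_AE)
  then have "emeasure lborel N = 0"
    by (simp add: emeasure_lborel_pair_slices[OF N_sets])
  with N_sets show ?thesis
    unfolding N_def by (intro null_setsI) simp_all
qed

lemma emeasure_origin_or_apex_triples:
  assumes [measurable]: "R \<in> sets borel"
  shows "emeasure lborel (origin_triangles R \<union> apex_triples R \<union> rotate_triple -` apex_triples R
      \<union> rotate_triple -` rotate_triple -` apex_triples R) = emeasure lborel R ^ 3"
proof -
  define rot :: "complex \<times> complex \<times> complex \<Rightarrow> _" where "rot = rotate_triple"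
  define U where "U = origin_triangles R \<union> apex_triples R \<union> rot -` apex_triples R \<union> rot -` rot -` apex_triples R"
  define N where "N = {(p, q, s :: complex). cross p q = 0}"
  have null: "N \<union> rot -` N \<union> rot -` rot -` N \<in> null_sets lborel"
    using null_sets_cross_zero_triples unfolding N_def rot_def
    by (intro null_sets.Un null_sets_lborel_rotate_triple)
  have [measurable]: "rot -` apex_triples R \<in> sets borel" "rot -` rot -` apex_triples R \<in> sets borel"
    by (simp_all add: rot_def measurable_sets_borel[OF measurable_rotate_triple] sets_apex_triples[OF assms])
  have U_sets: "U \<in> sets borel"
    unfolding U_def by measurable
  have RRR_sets: "R \<times> R \<times> R \<in> sets borel"
    by (simp add: sets_borel_Times)
  have "U \<subseteq> R \<times> R \<times> R"
    by (auto simp: U_def rot_def rotate_triple_def origin_triangles_def apex_triples_def)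
  then have U_le: "emeasure lborel U \<le> emeasure lborel (R \<times> R \<times> R)"
    by (rule emeasure_mono) (simp only: sets_lborel RRR_sets)
  have "R \<times> R \<times> R \<subseteq> U \<union> (N \<union> rot -` N \<union> rot -` rot -` N)"
    using zero_in_convex_hull_or_apex
    by (fastforce simp: U_def N_def rot_def rotate_triple_def origin_triangles_def apex_triples_def)
  then have "emeasure lborel (R \<times> R \<times> R) \<le> emeasure lborel (U \<union> (N \<union> rot -` N \<union> rot -` rot -` N))"
    using null U_sets by (intro emeasure_mono) auto
  also have "\<dots> = emeasure lborel U"
    using null U_sets by (intro emeasure_Un_null_set) auto
  finally have "emeasure lborel U = emeasure lborel (R \<times> R \<times> R)"
    using U_le by (rule antisym[rotated])
  then show ?thesis
    by (simp add: U_def rot_def emeasure_lborel_Times sets_borel_Times power3_eq_cube mult.assoc)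
qed

lemma emeasure_origin_triangles:
  assumes [measurable]: "R \<in> sets borel"
  shows "emeasure lborel (origin_triangles R) + 3 * (\<integral>\<^sup>+p. indicator R p * left_measure R p ^ 2 \<partial>lborel)
    = emeasure lborel R ^ 3"
proof -
  define rot :: "complex \<times> complex \<times> complex \<Rightarrow> _" where "rot = rotate_triple"
  define T where "T = origin_triangles R"
  define A where "A = apex_triples R"
  have sets: "T \<in> sets lborel" "A \<in> sets lborel" "rot -` A \<in> sets lborel" "rot -` rot -` A \<in> sets lborel"
    by (simp_all add: T_def A_def rot_def measurable_sets_borel[OF measurable_rotate_triple]
        sets_origin_triangles[OF assms] sets_apex_triples[OF assms])
  have hull_rot: "{q, s, p} = {p, q, s}" "{s, p, q} = {p, q, s}" for p q s :: complex
    by auto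
  have "T \<inter> A = {}" "(T \<union> A) \<inter> rot -` A = {}" "(T \<union> A \<union> rot -` A) \<inter> rot -` rot -` A = {}"
    by (fastforce simp: T_def A_def rot_def rotate_triple_def origin_triangles_def apex_triples_def hull_rot
        dest: cross_pos_imp_zero_notin_convex_hull cross_pos_asym)+
  then have "emeasure lborel (T \<union> A \<union> rot -` A \<union> rot -` rot -` A)
      = emeasure lborel T + emeasure lborel A + emeasure lborel (rot -` A) + emeasure lborel (rot -` rot -` A)"
    using sets by (simp add: plus_emeasure[symmetric] del: Un_iff)
  then have "emeasure lborel R ^ 3
      = emeasure lborel T + emeasure lborel A + emeasure lborel (rot -` A) + emeasure lborel (rot -` rot -` A)"
    using emeasure_origin_or_apex_triples[OF assms] by (simp add: T_def A_def rot_def)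
  also have "\<dots> = emeasure lborel T + 3 * emeasure lborel A"
    using distrib_right[of 2 1 "emeasure lborel A"]
    using sets by (simp add: rot_def emeasure_lborel_rotate_triple mult_2 add.assoc)
  finally show ?thesis
    using assms by (simp add: T_def A_def emeasure_apex_triples)
qed

section \<open>The limacon\<close>

definition limacon_radius :: "real \<Rightarrow> real \<Rightarrow> real" where
  "limacon_radius a t = limacon_const a * (a + cos t)"

lemma limacon_const_pos: "a > 1 \<Longrightarrow> limacon_const a > 0"
  unfolding limacon_const_def by (auto intro!: divide_pos_pos mult_pos_pos add_pos_nonneg)

lemma limacon_const_squared: "(limacon_const a)^2 = 2 / ((2 * a^2 + 1) * pi)"
proof -
  have "0 \<le> (2 * a^2 + 1) * pi" by (simp add: add_nonneg_nonneg)
  then show ?thesis unfolding limacon_const_def by (simp add: power_divide)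
qed

lemma limacon_denominator_pos: "2 * a^2 + 1 > (0::real)"
  by (simp add: add_nonneg_pos)

lemma limacon_radius_pos:
  assumes "a > 1"
  shows "limacon_radius a t > 0"
  unfolding limacon_radius_def
  using limacon_const_pos[OF assms] cos_ge_minus_one[of t] assms by (intro mult_pos_pos) linarith+

lemma measurable_limacon_radius [measurable]: "limacon_radius a \<in> borel_measurable borel"
  unfolding limacon_radius_def by measurable

lemma limacon_region_eq:
  assumes "a > 1"
  shows "limacon_region a = {z. (cmod z)^2 \<le> limacon_const a * (a * cmod z + Re z)}"
proof (intro equalityI subsetI)
  fix z assume "z \<in> limacon_region a"
  then obtain r t where z: "z = of_real r * cis t" and r: "0 \<le> r" "r \<le> limacon_const a * (a + cos t)"
    unfolding limacon_region_def by auto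
  have "r * r \<le> r * (limacon_const a * (a + cos t))"
    using r by (intro mult_left_mono) auto
  with r show "z \<in> {z. (cmod z)^2 \<le> limacon_const a * (a * cmod z + Re z)}"
    by (simp add: z norm_mult power2_eq_square algebra_simps)
next
  fix z assume "z \<in> {z. (cmod z)^2 \<le> limacon_const a * (a * cmod z + Re z)}"
  then have ineq: "cmod z * cmod z \<le> cmod z * (limacon_const a * (a + cos (Arg2pi z)))"
    by (simp add: cos_Arg2pi power2_eq_square algebra_simps)
  have polar: "z = of_real (cmod z) * cis (Arg2pi z)" "0 \<le> Arg2pi z" "Arg2pi z \<le> 2 * pi"
    using Arg2pi_eq[of z] Arg2pi_ge_0[of z] Arg2pi_lt_2pi[of z] by (simp_all add: cis_conv_exp)
  have bound: "cmod z \<le> limacon_const a * (a + cos (Arg2pi z))"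
  proof (cases "z = 0")
    case True
    then show ?thesis
      using limacon_const_pos[OF assms] cos_ge_minus_one assms by (simp add: add_pos_nonneg)
  qed (use ineq in simp)
  have "\<exists>r t. z = of_real r * cis t \<and> 0 \<le> t \<and> t \<le> 2 * pi \<and> 0 \<le> r \<and>
      r \<le> limacon_const a * (a + cos t)"
    by (rule exI[of _ "cmod z"], rule exI[of _ "Arg2pi z"]) (use polar bound in simp)
  then show "z \<in> limacon_region a"
    unfolding limacon_region_def by simp
qed

lemma sets_limacon_region [measurable]: "a > 1 \<Longrightarrow> limacon_region a \<in> sets borel"
  unfolding limacon_region_eq by (intro borel_closed closed_Collect_le continuous_intros)

lemma limacon_region_polar_iff:
  assumes "a > 1" "r > 0"
  shows "of_real r * cis t \<in> limacon_region a \<longleftrightarrow> r \<le> limacon_radius a t"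
proof -
  have "of_real r * cis t \<in> limacon_region a \<longleftrightarrow> r * r \<le> r * limacon_radius a t"
    using assms by (simp add: limacon_region_eq norm_mult limacon_radius_def power2_eq_square algebra_simps)
  also have "\<dots> \<longleftrightarrow> r \<le> limacon_radius a t"
    using assms by simp
  finally show ?thesis .
qed

lemma nn_integral_limacon_polar:
  fixes h :: "complex \<Rightarrow> ennreal" and W :: "real \<Rightarrow> ennreal"
  assumes "a > 1"
    and [measurable]: "h \<in> borel_measurable borel" "W \<in> borel_measurable borel"
    and h: "\<And>r t. r > 0 \<Longrightarrow> h (of_real r * cis t) = indicator (limacon_region a) (of_real r * cis t) * W t"
  shows "(\<integral>\<^sup>+z. h z \<partial>lborel) = (\<integral>\<^sup>+t. ennreal ((limacon_radius a t)^2 / 2) * W t * indicator {0<..<2*pi} t \<partial>lborel)"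
proof -
  have radial: "(\<integral>\<^sup>+r. ennreal r * h (of_real r * cis t) * indicator {0<..} r \<partial>lborel)
      = ennreal ((limacon_radius a t)^2 / 2) * W t" for t
  proof -
    have "(\<integral>\<^sup>+r. ennreal r * h (of_real r * cis t) * indicator {0<..} r \<partial>lborel)
        = (\<integral>\<^sup>+r. W t * (ennreal r * indicator {0<..limacon_radius a t} r) \<partial>lborel)"
      using limacon_region_polar_iff[OF \<open>a > 1\<close>] h
      by (intro nn_integral_cong) (auto simp: indicator_def mult_ac)
    also have "\<dots> = W t * ennreal ((limacon_radius a t)^2 / 2 - 0^2 / 2)"
      using limacon_radius_pos[OF \<open>a > 1\<close>, of t]
      by (subst nn_integral_cmult, measurable)
         (subst nn_integral_FTC_between[where f = "\<lambda>r. r" and F = "\<lambda>r. r^2 / 2" and a = 0 and b = "limacon_radius a t"],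
          auto intro!: derivative_eq_intros)
    finally show ?thesis
      by (simp add: mult.commute)
  qed
  show ?thesis
    by (simp add: nn_integral_polar radial)
qed

definition limacon_sector :: "real \<Rightarrow> real \<Rightarrow> real" where
  "limacon_sector a t = (limacon_const a)^2 / 2 * (a^2 * t + 2 * a * sin t + (t + sin t * cos t) / 2)"

lemma limacon_sector_deriv: "(limacon_sector a has_real_derivative (limacon_radius a t)^2 / 2) (at t)"
  unfolding limacon_sector_def limacon_radius_def
  by (auto intro!: derivative_eq_intros simp: field_simps power2_eq_square)
     (use sin_cos_squared_add3[of t] in algebra)

lemma nn_integral_limacon_sector:
  assumes "s \<le> t" "{s<..<t} \<subseteq> S" "S \<subseteq> {s..t}"
  shows "(\<integral>\<^sup>+\<theta>. ennreal ((limacon_radius a \<theta>)^2 / 2) * indicator S \<theta> \<partial>lborel)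
    = ennreal (limacon_sector a t - limacon_sector a s)"
  by (rule nn_integral_FTC_between[where F = "limacon_sector a"]) (use assms in \<open>auto intro: limacon_sector_deriv\<close>)

lemma limacon_sector_mono: "s \<le> t \<Longrightarrow> limacon_sector a s \<le> limacon_sector a t"
  by (rule DERIV_nonneg_imp_nondecreasing[of s t "limacon_sector a"])
     (auto intro: limacon_sector_deriv)

lemma limacon_sector_full_turn: "limacon_sector a (t + 2 * pi) - limacon_sector a t = 1"
proof -
  have "limacon_sector a (t + 2 * pi) - limacon_sector a t = (limacon_const a)^2 / 2 * ((2 * a^2 + 1) * pi)"
    by (simp add: limacon_sector_def) (simp add: algebra_simps)
  also have "\<dots> = 1"
    using limacon_denominator_pos[of a] by (simp add: limacon_const_squared)
  finally show ?thesis .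
qed

definition limacon_asymmetry :: "real \<Rightarrow> real" where
  "limacon_asymmetry a = 4 * a / ((2 * a^2 + 1) * pi)"

lemma limacon_sector_half_turn:
  "limacon_sector a (t + pi) - limacon_sector a t = 1/2 - limacon_asymmetry a * sin t"
proof -
  have "limacon_sector a (t + pi) - limacon_sector a t
      = (limacon_const a)^2 / 2 * ((2 * a^2 + 1) * pi / 2 - 4 * a * sin t)"
    by (simp add: limacon_sector_def) (simp add: algebra_simps)
  also have "\<dots> = 1/2 - limacon_asymmetry a * sin t"
  proof -
    define D where "D = (2 * a^2 + 1) * pi"
    have "D > 0"
      using limacon_denominator_pos[of a] by (simp add: D_def)
    then show ?thesis
      unfolding limacon_const_squared limacon_asymmetry_def D_def[symmetric] by (simp add: field_simps)
  qed
  finally show ?thesis .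
qed

lemma limacon_asymmetry_bound: "limacon_asymmetry a * sin t \<le> 1/2"
  using limacon_sector_mono[of t "t + pi" a] limacon_sector_half_turn[of a t] by simp

lemma emeasure_limacon_region:
  assumes "a > 1"
  shows "emeasure lborel (limacon_region a) = 1"
proof -
  have "emeasure lborel (limacon_region a) = (\<integral>\<^sup>+z. indicator (limacon_region a) z \<partial>lborel)"
    using assms by simp
  also have "\<dots> = (\<integral>\<^sup>+t. ennreal ((limacon_radius a t)^2 / 2) * 1 * indicator {0<..<2*pi} t \<partial>lborel)"
    using assms by (intro nn_integral_limacon_polar) auto
  also have "\<dots> = ennreal (limacon_sector a (0 + 2 * pi) - limacon_sector a 0)"
    by (simp only: mult_1_right, rule nn_integral_limacon_sector) auto
  finally show ?thesis
    by (simp only: limacon_sector_full_turn) simp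
qed

lemma sin_pos_iff_between_two_periods:
  assumes "- 2 * pi < x" "x < 2 * pi"
  shows "0 < sin x \<longleftrightarrow> (- 2 * pi < x \<and> x < - pi) \<or> (0 < x \<and> x < pi)"
proof -
  consider "x \<le> - pi" | "- pi \<le> x" "x \<le> 0" | "0 < x" "x < pi" | "pi \<le> x"
    by linarith
  then show ?thesis
  proof cases
    case 1
    have "0 < sin x \<longleftrightarrow> 0 < sin (x + 2 * pi)" by simp
    also have "\<dots> \<longleftrightarrow> x < - pi"
      using 1 assms sin_gt_zero[of "x + 2 * pi"] sin_ge_zero[of "- x - pi"]
      by (cases "x = - pi") (auto simp: sin_diff)
    finally show ?thesis using 1 assms by auto
  next
    case 2
    then show ?thesis using sin_ge_zero[of "- x"] by auto
  next
    case 3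
    then show ?thesis by (simp add: sin_gt_zero)
  next
    case 4
    then show ?thesis using assms sin_ge_zero[of "x - pi"] by (auto simp: sin_diff)
  qed
qed

lemma sin_diff_pos_iff:
  assumes "0 \<le> \<alpha>" "\<alpha> < 2 * pi" "0 < t" "t < 2 * pi"
  shows "0 < sin (t - \<alpha>) \<longleftrightarrow> (\<alpha> < t \<and> t < \<alpha> + pi) \<or> t < \<alpha> - pi"
  using sin_pos_iff_between_two_periods[of "t - \<alpha>"] assms by auto

lemma nn_integral_limacon_sector_halfplane:
  assumes "0 \<le> \<alpha>" "\<alpha> < 2 * pi"
  shows "(\<integral>\<^sup>+t. ennreal ((limacon_radius a t)^2 / 2) * indicator {t. 0 < sin (t - \<alpha>)} t * indicator {0<..<2*pi} t \<partial>lborel)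
    = ennreal (limacon_sector a (\<alpha> + pi) - limacon_sector a \<alpha>)"
    (is "(\<integral>\<^sup>+t. ?f t * _ * _ \<partial>lborel) = _")
proof (cases "\<alpha> < pi")
  case True
  then have "{t. 0 < sin (t - \<alpha>)} \<inter> {0<..<2*pi} = {\<alpha><..<\<alpha> + pi}"
    using assms by (auto simp: sin_diff_pos_iff[OF assms])
  then have "(\<integral>\<^sup>+t. ?f t * indicator {t. 0 < sin (t - \<alpha>)} t * indicator {0<..<2*pi} t \<partial>lborel)
      = (\<integral>\<^sup>+t. ?f t * indicator {\<alpha><..<\<alpha> + pi} t \<partial>lborel)"
    by (simp add: mult.assoc indicator_inter_arith[symmetric])
  also have "\<dots> = ennreal (limacon_sector a (\<alpha> + pi) - limacon_sector a \<alpha>)"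
    by (rule nn_integral_limacon_sector) auto
  finally show ?thesis .
next
  case False
  then have "indicator {t. 0 < sin (t - \<alpha>)} t * indicator {0<..<2*pi} t
      = (indicator {0<..<\<alpha> - pi} t + indicator {\<alpha><..<2*pi} t :: ennreal)" for t
    using assms by (auto simp: sin_diff_pos_iff[OF assms] indicator_def)
  then have "(\<integral>\<^sup>+t. ?f t * indicator {t. 0 < sin (t - \<alpha>)} t * indicator {0<..<2*pi} t \<partial>lborel)
      = (\<integral>\<^sup>+t. ?f t * indicator {0<..<\<alpha> - pi} t \<partial>lborel) + (\<integral>\<^sup>+t. ?f t * indicator {\<alpha><..<2*pi} t \<partial>lborel)"
    by (simp add: mult.assoc distrib_left nn_integral_add)
  also have "\<dots> = ennreal (limacon_sector a (\<alpha> - pi) - limacon_sector a 0)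
      + ennreal (limacon_sector a (2 * pi) - limacon_sector a \<alpha>)"
    using assms False by (intro arg_cong2[where f = "(+)"] nn_integral_limacon_sector) auto
  also have "\<dots> = ennreal ((limacon_sector a (\<alpha> - pi) - limacon_sector a 0) + (limacon_sector a (2 * pi) - limacon_sector a \<alpha>))"
    using assms False limacon_sector_mono[of 0 "\<alpha> - pi" a] limacon_sector_mono[of \<alpha> "2 * pi" a]
    by (subst ennreal_plus[symmetric]) auto
  also have "(limacon_sector a (\<alpha> - pi) - limacon_sector a 0) + (limacon_sector a (2 * pi) - limacon_sector a \<alpha>)
      = limacon_sector a (\<alpha> + pi) - limacon_sector a \<alpha>"
    using limacon_sector_full_turn[of a 0] limacon_sector_full_turn[of a "\<alpha> - pi"] by (simp add: add.commute)
  finally show ?thesis .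
qed

lemma left_measure_limacon_region:
  assumes "a > 1" "p \<noteq> 0"
  shows "left_measure (limacon_region a) p = ennreal (1/2 - limacon_asymmetry a * (Im p / cmod p))"
proof -
  define \<alpha> where "\<alpha> = Arg2pi p"
  have \<alpha>: "0 \<le> \<alpha>" "\<alpha> < 2 * pi"
    using Arg2pi_ge_0[of p] Arg2pi_lt_2pi[of p] by (simp_all add: \<alpha>_def)
  have cross_polar: "cross p (of_real r * cis t) = r * cmod p * sin (t - \<alpha>)" for r t
    by (simp add: cross_eq \<alpha>_def cos_Arg2pi sin_Arg2pi sin_diff algebra_simps)
  have "left_measure (limacon_region a) p = (\<integral>\<^sup>+z. indicator (limacon_region a \<inter> {z. 0 < cross p z}) z \<partial>lborel)"
    using assms(1) by (simp add: left_measure_def)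
  also have "\<dots> = (\<integral>\<^sup>+t. ennreal ((limacon_radius a t)^2 / 2) * indicator {t. 0 < sin (t - \<alpha>)} t * indicator {0<..<2*pi} t \<partial>lborel)"
  proof (rule nn_integral_limacon_polar[OF assms(1)])
    fix r t :: real assume "r > 0"
    with assms(2) have "0 < r * cmod p"
      by simp
    then have "0 < cross p (of_real r * cis t) \<longleftrightarrow> 0 < sin (t - \<alpha>)"
      unfolding cross_polar by (metis zero_less_mult_pos mult_pos_pos)
    then show "indicator (limacon_region a \<inter> {z. 0 < cross p z}) (of_real r * cis t)
        = indicator (limacon_region a) (of_real r * cis t) * (indicator {t. 0 < sin (t - \<alpha>)} t :: ennreal)"
      by (simp add: indicator_def)
  qed (use assms(1) in measurable)
  also have "\<dots> = ennreal (limacon_sector a (\<alpha> + pi) - limacon_sector a \<alpha>)"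
    using \<alpha> by (rule nn_integral_limacon_sector_halfplane)
  also have "\<dots> = ennreal (1/2 - limacon_asymmetry a * (Im p / cmod p))"
  proof -
    have "sin \<alpha> = Im p / cmod p"
      using sin_Arg2pi[of p] assms(2) by (simp add: \<alpha>_def field_simps)
    then show ?thesis by (simp add: limacon_sector_half_turn)
  qed
  finally show ?thesis .
qed

definition limacon_weighted_sector :: "real \<Rightarrow> real \<Rightarrow> real" where
  "limacon_weighted_sector a t = (limacon_const a)^2 / 2 *
     ((a^2 * t + 2 * a * sin t + (t + sin t * cos t) / 2) / 4
      + limacon_asymmetry a * (a + cos t)^3 / 3
      + (limacon_asymmetry a)^2 * (a^2 * (t - sin t * cos t) / 2 + 2 * a * (sin t)^3 / 3 + t / 8
          - sin t * cos t * ((cos t)^2 - (sin t)^2) / 8))"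

lemma limacon_weighted_sector_deriv:
  "(limacon_weighted_sector a has_real_derivative
     (limacon_radius a t)^2 * (1/2 - limacon_asymmetry a * sin t)^2 / 2) (at t)"
  unfolding limacon_weighted_sector_def limacon_radius_def
  by (auto intro!: derivative_eq_intros simp: field_simps power2_eq_square power3_eq_cube)
     (use sin_cos_squared_add3[of t] in algebra)

lemma limacon_weighted_sector_full_turn:
  "limacon_weighted_sector a (2 * pi) - limacon_weighted_sector a 0
     = 1/4 + 4 * a^2 * (4 * a^2 + 1) / ((2 * a^2 + 1)^3 * pi^2)"
proof -
  define D where "D = (2 * a^2 + 1) * pi"
  have "D > 0"
    using limacon_denominator_pos[of a] by (simp add: D_def)
  have "limacon_weighted_sector a (2 * pi) - limacon_weighted_sector a 0
      = (limacon_const a)^2 / 2 * (D / 4 + (limacon_asymmetry a)^2 * (pi * (4 * a^2 + 1) / 4))"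
    by (simp add: limacon_weighted_sector_def) (simp add: D_def algebra_simps)
  also have "\<dots> = 1/4 + 4 * a^2 * pi * (4 * a^2 + 1) / D^3"
    unfolding limacon_const_squared limacon_asymmetry_def D_def[symmetric]
    using \<open>D > 0\<close> by (simp add: field_simps power2_eq_square power3_eq_cube)
  also have "\<dots> = 1/4 + 4 * a^2 * (4 * a^2 + 1) / ((2 * a^2 + 1)^3 * pi^2)"
    unfolding D_def by (simp add: power_mult_distrib power2_eq_square power3_eq_cube mult_ac)
  finally show ?thesis .
qed

lemma nn_integral_limacon_left_measure_squared:
  assumes "a > 1"
  shows "(\<integral>\<^sup>+p. indicator (limacon_region a) p * left_measure (limacon_region a) p ^ 2 \<partial>lborel)
    = ennreal (1/4 + 4 * a^2 * (4 * a^2 + 1) / ((2 * a^2 + 1)^3 * pi^2))"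
proof -
  let ?w = "\<lambda>t. 1/2 - limacon_asymmetry a * sin t"
  have "(\<integral>\<^sup>+p. indicator (limacon_region a) p * left_measure (limacon_region a) p ^ 2 \<partial>lborel)
      = (\<integral>\<^sup>+t. ennreal ((limacon_radius a t)^2 / 2) * ennreal ((?w t)^2) * indicator {0<..<2*pi} t \<partial>lborel)"
  proof (rule nn_integral_limacon_polar[OF assms])
    fix r t :: real assume "r > 0"
    then have "left_measure (limacon_region a) (of_real r * cis t) = ennreal (?w t)"
      by (simp add: left_measure_limacon_region[OF assms] norm_mult)
    then show "indicator (limacon_region a) (of_real r * cis t) * left_measure (limacon_region a) (of_real r * cis t) ^ 2
        = indicator (limacon_region a) (of_real r * cis t) * ennreal ((?w t)^2)"
      using limacon_asymmetry_bound[of a t] by (simp add: ennreal_power)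
  qed (use assms in measurable)
  also have "\<dots> = (\<integral>\<^sup>+t. ennreal ((limacon_radius a t)^2 / 2 * (?w t)^2) * indicator {0<..<2*pi} t \<partial>lborel)"
    by (intro nn_integral_cong) (simp add: ennreal_mult[symmetric])
  also have "\<dots> = ennreal (limacon_weighted_sector a (2 * pi) - limacon_weighted_sector a 0)"
    by (intro nn_integral_FTC_between[where F = "limacon_weighted_sector a"])
       (auto intro: limacon_weighted_sector_deriv)
  finally show ?thesis
    by (simp only: limacon_weighted_sector_full_turn)
qed

theorem mainTheorem5:
  fixes a :: real
  assumes "a > 1"
  shows "measure lborel (limacon_region a) = 1 \<and>
         triangle_contains_origin_prob (limacon_region a) =
           1/4 - 12 * a^2 * (4 * a^2 + 1) / ((2 * a^2 + 1)^3 * pi^2)"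
proof -
  define V where "V = 1/4 + 4 * a^2 * (4 * a^2 + 1) / ((2 * a^2 + 1)^3 * pi^2)"
  have "V \<ge> 0"
    unfolding V_def by (intro add_nonneg_nonneg divide_nonneg_nonneg mult_nonneg_nonneg) auto
  have area: "measure lborel (limacon_region a) = 1"
    using emeasure_limacon_region[OF assms] by (simp add: measure_def)
  have "(\<integral>\<^sup>+p. indicator (limacon_region a) p * left_measure (limacon_region a) p ^ 2 \<partial>lborel) = ennreal V"
    unfolding V_def by (rule nn_integral_limacon_left_measure_squared[OF assms])
  then have "emeasure lborel (origin_triangles (limacon_region a)) + ennreal (3 * V) = ennreal 1"
    using emeasure_origin_triangles[of "limacon_region a"] assms \<open>V \<ge> 0\<close>
    by (simp add: emeasure_limacon_region ennreal_mult)
  then have "measure lborel (origin_triangles (limacon_region a)) = 1 - 3 * V"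
    by (rule measure_eq_diff_if_emeasure_add) (use \<open>V \<ge> 0\<close> in simp_all)
  then show ?thesis
    using area by (simp add: triangle_contains_origin_prob_def origin_triangles_def lborel_prod V_def)
qed

end
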